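(* Let $W\ge1$ be an integer, $\xi\in\mathbb Z$ and $r\ge1$ an integer. For the one-dimensional band graph $\Gamma_{1,W}$, the Green's function $G_r$ of $B_r(\xi)$ satisfies, for all $x\in B_r(\xi)$, $$\frac1{2W^3}\big(rW+1-|x-\xi|\big)\le G_r(\xi,x)\le\frac1{W^2}\big(W+rW-|x-\xi|\big),$$ and the Poisson kernel satisfies, for all $x\in\partial B_r(\xi)$, $$\frac1{2W^3}\le P_r(\xi,x)\le1.$$
   Context: $\Gamma_{1,W}$ has vertex set $\mathbb Z$ with $x\sim y$ iff $0<|x-y|\le W$ (each vertex has degree $2W$). $B_r(\xi)=\{x\in\mathbb Z:|x-\xi|\le rW\}$ and $\partial B_r(\xi)=\{x:rW<|x-\xi|\le(r+1)W\}$. The Dirichlet Laplacian $-\Delta^{B_r}$ is the matrix on $\ell^2(B_r(\xi))$ with entries $2W\delta_{xy}-\mathbf 1_{0<|x-y|\le W}$, $x,y\in B_r(\xi)$; $G_r(x,y)=(-\Delta^{B_r})^{-1}(x,y)$ for $x,y\in B_r(\xi)$. The Poisson kernel is $P_r(\xi,x)=\sum_{y\in B_r(\xi),\,0<|x-y|\le W}G_r(\xi,y)$ for $x\in\partial B_r(\xi)$ (equivalently, $P_r(\cdot,x)$ is the harmonic function on $B_r(\xi)$ with boundary values $\delta_x$ on $\partial B_r(\xi)$). *)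

theory Defs
  imports "HOL-Analysis.Analysis"
begin

text \<open>Band graph Gamma_{1,W} on the integers: x ~ y iff 0 < |x - y| <= W.\<close>

definition band_ball :: "int \<Rightarrow> int \<Rightarrow> int \<Rightarrow> int set" where
  "band_ball W r \<xi> = {x. \<bar>x - \<xi>\<bar> \<le> r * W}"

definition band_boundary :: "int \<Rightarrow> int \<Rightarrow> int \<Rightarrow> int set" where
  "band_boundary W r \<xi> = {x. r * W < \<bar>x - \<xi>\<bar> \<and> \<bar>x - \<xi>\<bar> \<le> (r + 1) * W}"

definition dir_lap :: "int \<Rightarrow> int \<Rightarrow> int \<Rightarrow> real" where
  "dir_lap W x y = (if x = y then 2 * real_of_int W
                    else if 0 < \<bar>x - y\<bar> \<and> \<bar>x - y\<bar> \<le> W then -1 else 0)"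

definition mat_inv_on :: "int set \<Rightarrow> (int \<Rightarrow> int \<Rightarrow> real) \<Rightarrow> (int \<Rightarrow> int \<Rightarrow> real)" where
  "mat_inv_on B M = (THE G. (\<forall>x\<in>B. \<forall>y\<in>B. (\<Sum>z\<in>B. M x z * G z y) = (if x = y then 1 else 0))
                          \<and> (\<forall>x y. x \<notin> B \<or> y \<notin> B \<longrightarrow> G x y = 0))"

text \<open>Green's function G_r = (-Delta^{B_r})^{-1}.\<close>
definition green :: "int \<Rightarrow> int \<Rightarrow> int \<Rightarrow> int \<Rightarrow> int \<Rightarrow> real" where
  "green W r \<xi> = mat_inv_on (band_ball W r \<xi>) (dir_lap W)"

definition poisson :: "int \<Rightarrow> int \<Rightarrow> int \<Rightarrow> int \<Rightarrow> real" where
  "poisson W r \<xi> x = (\<Sum>y\<in>{y\<in>band_ball W r \<xi>. 0 < \<bar>x - y\<bar> \<and> \<bar>x - y\<bar> \<le> W}. green W r \<xi> \<xi> y)"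

end

theory Submission
  imports Defs "Jordan_Normal_Form.Determinant"
begin

text \<open>
  Both estimates come from the maximum principle for the Dirichlet Laplacian of the ball
  B = [\<xi> - rW, \<xi> + rW]. The column G(., \<xi>) has Laplacian \<delta>(., \<xi>), so it is squeezed
  between two explicit barriers: the tent (W + rW - |z - \<xi>|) / W^2 is superharmonic enough,
  and the smaller tent (rW + 1 - |z - \<xi>|) / (2 W^3), raised at \<xi> by a spike that absorbs
  its positive curvature near the apex, is subharmonic enough. Symmetry of G turns these into
  bounds for G(\<xi>, .). The Poisson kernel at x is bounded below by its single term at the
  endpoint of B next to x, and above because the sum of the columns G(., y) over the
  neighbours y of x in B has Laplacian equal to the indicator of these neighbours, which is
  dominated by the Laplacian of the constant 1 since each of them has the neighbour x outside B.
\<close>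

definition dirichlet_lap :: "int set \<Rightarrow> int \<Rightarrow> (int \<Rightarrow> real) \<Rightarrow> int \<Rightarrow> real" where
  "dirichlet_lap B W h x = (\<Sum>z\<in>B. dir_lap W x z * h z)"

definition band_lap :: "int \<Rightarrow> (int \<Rightarrow> real) \<Rightarrow> int \<Rightarrow> real" where
  "band_lap W h x = (\<Sum>d=1..W. 2 * h x - h (x + d) - h (x - d))"

definition zero_ext :: "int set \<Rightarrow> (int \<Rightarrow> real) \<Rightarrow> int \<Rightarrow> real" where
  "zero_ext B h z = (if z \<in> B then h z else 0)"

section \<open>Arithmetic of the band Laplacian\<close>

lemma double_sum_Icc_1_int: "0 \<le> W \<Longrightarrow> 2 * (\<Sum>d=1..W. d) = W * (W + 1)" for W :: int
proof (induction W rule: int_ge_induct)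
  case base then show ?case by simp
next
  case (step k)
  have "{1..k+1} = insert (k+1) {1..k}" using step(1) by auto
  with step show ?case by (simp add: algebra_simps)
qed

lemma abs_second_difference:
  "0 \<le> d \<Longrightarrow> \<bar>p + d\<bar> + \<bar>p - d\<bar> - 2 * \<bar>p\<bar> = 2 * max 0 (d - \<bar>p\<bar>)" for p d :: int
  by (auto simp: abs_if max_def)

definition tent_curvature :: "int \<Rightarrow> int \<Rightarrow> int" where
  "tent_curvature W p = (\<Sum>d=1..W. max 0 (d - \<bar>p\<bar>))"

lemma tent_curvature_nonneg: "0 \<le> tent_curvature W p"
  unfolding tent_curvature_def by (rule sum_nonneg) simp

lemma tent_curvature_0: "0 \<le> W \<Longrightarrow> 2 * tent_curvature W 0 = W * (W + 1)"
  unfolding tent_curvature_def using double_sum_Icc_1_int by simp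

lemma tent_curvature_le:
  assumes "p \<noteq> 0" "0 \<le> W"
  shows "2 * tent_curvature W p \<le> W * (W - 1)"
proof -
  have "tent_curvature W p \<le> (\<Sum>d=1..W. d - 1)"
    unfolding tent_curvature_def using assms(1) by (intro sum_mono) auto
  also have "\<dots> = (\<Sum>d=1..W. d) - W"
    using assms(2) by (simp add: sum_subtractf)
  finally show ?thesis
    using double_sum_Icc_1_int[OF assms(2)] by (simp add: algebra_simps)
qed

lemma tent_curvature_far: "W \<le> \<bar>p\<bar> \<Longrightarrow> tent_curvature W p = 0"
  unfolding tent_curvature_def by (intro sum.neutral) auto

text \<open>
  The spike s = (W - 1) / (2 W^2) at the apex is exactly what cancels the largest possible
  curvature W (W - 1) / 2 of the tent of slope 1 / (2 W^3) next to the apex.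
\<close>
lemma spiked_tent_curvature_le:
  fixes W p :: int
  assumes "1 \<le> W"
  shows "1 / (2 * real_of_int W ^ 3) * (2 * real_of_int (tent_curvature W p))
         + (real_of_int W - 1) / (2 * real_of_int W ^ 2)
           * (if p = 0 then 2 * real_of_int W else if \<bar>p\<bar> \<le> W then -1 else 0)
       \<le> (if p = 0 then 1 else 0)"
proof -
  consider "p = 0" | "p \<noteq> 0" "\<bar>p\<bar> \<le> W" | "W < \<bar>p\<bar>" by linarith
  then show ?thesis
  proof cases
    case 1
    then have "real_of_int (2 * tent_curvature W p) = real_of_int W * (real_of_int W + 1)"
      using tent_curvature_0 assms by simp
    with 1 assms show ?thesis
      by (simp add: field_simps power2_eq_square power3_eq_cube)
  next
    case 2
    then have "2 * tent_curvature W p \<le> W * (W - 1)"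
      using assms by (intro tent_curvature_le) auto
    then have "real_of_int (2 * tent_curvature W p) \<le> real_of_int (W * (W - 1))"
      by (simp only: of_int_le_iff)
    then have "2 * real_of_int (tent_curvature W p) \<le> real_of_int W * (real_of_int W - 1)"
      by simp
    with 2 assms show ?thesis
      by (simp add: field_simps power2_eq_square power3_eq_cube)
  next
    case 3
    then show ?thesis using tent_curvature_far[of W p] assms by auto
  qed
qed

lemma band_lap_add: "band_lap W (\<lambda>z. f z + g z) x = band_lap W f x + band_lap W g x"
  by (simp add: band_lap_def sum.distrib[symmetric] algebra_simps)

lemma band_lap_scale: "band_lap W (\<lambda>z. c * f z) x = c * band_lap W f x"
  by (simp add: band_lap_def sum_distrib_left algebra_simps)

lemma band_lap_tent:
  "band_lap W (\<lambda>z. real_of_int (c - \<bar>z - \<xi>\<bar>)) y = 2 * real_of_int (tent_curvature W (y - \<xi>))"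
proof -
  have "band_lap W (\<lambda>z. real_of_int (c - \<bar>z - \<xi>\<bar>)) y
      = real_of_int (\<Sum>d=1..W. 2 * (c - \<bar>y - \<xi>\<bar>) - (c - \<bar>y + d - \<xi>\<bar>) - (c - \<bar>y - d - \<xi>\<bar>))"
    unfolding band_lap_def by simp
  also have "(\<Sum>d=1..W. 2 * (c - \<bar>y - \<xi>\<bar>) - (c - \<bar>y + d - \<xi>\<bar>) - (c - \<bar>y - d - \<xi>\<bar>))
      = 2 * tent_curvature W (y - \<xi>)"
    unfolding tent_curvature_def sum_distrib_left
    using abs_second_difference[of _ "y - \<xi>"] by (intro sum.cong) (auto simp: algebra_simps)
  finally show ?thesis by simp
qed

lemma band_lap_spike:
  assumes "0 \<le> W"
  shows "band_lap W (\<lambda>z. if z = \<xi> then 1 else 0) y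
       = (if y = \<xi> then 2 * real_of_int W else if \<bar>y - \<xi>\<bar> \<le> W then -1 else 0)"
proof (cases "y = \<xi>")
  case True
  then show ?thesis using assms by (simp add: band_lap_def)
next
  case False
  then have "band_lap W (\<lambda>z. if z = \<xi> then 1 else 0) y
           = (\<Sum>d=1..W. if d = \<bar>y - \<xi>\<bar> then -1 else 0)"
    unfolding band_lap_def by (intro sum.cong refl) auto
  with False show ?thesis by auto
qed

lemma band_lap_mono:
  assumes "g x = h x" and "\<And>d. d \<in> {1..W} \<Longrightarrow> g (x + d) \<le> h (x + d) \<and> g (x - d) \<le> h (x - d)"
  shows "band_lap W h x \<le> band_lap W g x"
  unfolding band_lap_def using assms by (intro sum_mono) force

section \<open>The Dirichlet Laplacian of a finite set\<close>

lemma sum_shift_Icc: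
  "(\<Sum>z\<in>{x+1..x+W}. F z) = (\<Sum>d=1..W. F (x + d))"
  "(\<Sum>z\<in>{x-W..x-1}. F z) = (\<Sum>d=1..W. F (x - d))" for x W :: int
proof -
  show "(\<Sum>z\<in>{x+1..x+W}. F z) = (\<Sum>d=1..W. F (x + d))"
    by (intro sum.reindex_bij_witness[of _ "\<lambda>d. x + d" "\<lambda>z. z - x"]) auto
  show "(\<Sum>z\<in>{x-W..x-1}. F z) = (\<Sum>d=1..W. F (x - d))"
    by (intro sum.reindex_bij_witness[of _ "\<lambda>d. x - d" "\<lambda>z. x - z"]) auto
qed

lemma sum_neighbours_zero_ext:
  assumes "finite B"
  shows "(\<Sum>z\<in>{z\<in>B. 0 < \<bar>x - z\<bar> \<and> \<bar>x - z\<bar> \<le> W}. h z)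
       = (\<Sum>d=1..W. zero_ext B h (x + d) + zero_ext B h (x - d))"
proof -
  have split: "{z\<in>B. 0 < \<bar>x - z\<bar> \<and> \<bar>x - z\<bar> \<le> W} = ({x+1..x+W} \<inter> B) \<union> ({x-W..x-1} \<inter> B)"
    by auto
  have "(\<Sum>z\<in>{z\<in>B. 0 < \<bar>x - z\<bar> \<and> \<bar>x - z\<bar> \<le> W}. h z)
      = (\<Sum>z\<in>{x+1..x+W} \<inter> B. h z) + (\<Sum>z\<in>{x-W..x-1} \<inter> B. h z)"
    unfolding split using assms by (intro sum.union_disjoint) auto
  also have "\<dots> = (\<Sum>z\<in>{x+1..x+W}. zero_ext B h z) + (\<Sum>z\<in>{x-W..x-1}. zero_ext B h z)"
    by (simp add: zero_ext_def sum.inter_restrict)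
  finally show ?thesis by (simp add: sum_shift_Icc sum.distrib)
qed

lemma dirichlet_lap_eq_band_lap:
  assumes "finite B" "x \<in> B" "0 \<le> W"
  shows "dirichlet_lap B W h x = band_lap W (zero_ext B h) x"
proof -
  let ?N = "{z\<in>B. 0 < \<bar>x - z\<bar> \<and> \<bar>x - z\<bar> \<le> W}"
  have "dirichlet_lap B W h x = dir_lap W x x * h x + (\<Sum>z\<in>B - {x}. dir_lap W x z * h z)"
    unfolding dirichlet_lap_def using assms by (simp add: sum.remove)
  also have "(\<Sum>z\<in>B - {x}. dir_lap W x z * h z) = (\<Sum>z\<in>?N. - h z)"
    using assms(1) by (intro sum.mono_neutral_cong_right) (auto simp: dir_lap_def)
  finally have "dirichlet_lap B W h x = 2 * real_of_int W * h x - (\<Sum>z\<in>?N. h z)"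
    by (simp add: dir_lap_def sum_negf)
  also have "\<dots> = 2 * real_of_int W * h x
      - (\<Sum>d=1..W. zero_ext B h (x + d) + zero_ext B h (x - d))"
    unfolding sum_neighbours_zero_ext[OF assms(1)] ..
  also have "\<dots> = band_lap W (zero_ext B h) x"
    using assms by (simp add: band_lap_def zero_ext_def[of B h x] sum_subtractf sum.distrib)
  finally show ?thesis .
qed

lemma band_lap_le_dirichlet_lap:
  assumes "finite B" "y \<in> B" "0 \<le> W" and "\<And>z. z \<notin> B \<Longrightarrow> \<bar>z - y\<bar> \<le> W \<Longrightarrow> 0 \<le> h z"
  shows "band_lap W h y \<le> dirichlet_lap B W h y"
  unfolding dirichlet_lap_eq_band_lap[OF assms(1-3)]
  using assms(2,4) by (intro band_lap_mono) (auto simp: zero_ext_def)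

lemma dirichlet_lap_le_band_lap:
  assumes "finite B" "y \<in> B" "0 \<le> W" and "\<And>z. z \<notin> B \<Longrightarrow> \<bar>z - y\<bar> \<le> W \<Longrightarrow> h z \<le> 0"
  shows "dirichlet_lap B W h y \<le> band_lap W h y"
  unfolding dirichlet_lap_eq_band_lap[OF assms(1-3)]
  using assms(2,4) by (intro band_lap_mono) (auto simp: zero_ext_def)

lemma dirichlet_lap_diff:
  "dirichlet_lap B W (\<lambda>z. f z - g z) x = dirichlet_lap B W f x - dirichlet_lap B W g x"
  by (simp add: dirichlet_lap_def sum_subtractf right_diff_distrib)

text \<open>
  At the rightmost minimiser x of a function h with negative minimum every term of the band
  Laplacian is non-positive, and the term for x + 1 is negative: that point lies outside B,
  where the extension by zero exceeds the minimum, or in B to the right of x.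
\<close>
lemma dirichlet_lap_nonneg_imp_nonneg:
  assumes fin: "finite B" and W: "1 \<le> W" and L: "\<And>y. y \<in> B \<Longrightarrow> 0 \<le> dirichlet_lap B W h y"
  shows "x \<in> B \<Longrightarrow> 0 \<le> h x"
proof (rule ccontr)
  assume "x \<in> B" "\<not> 0 \<le> h x"
  define m where "m = Min (h ` B)"
  have min: "\<And>z. z \<in> B \<Longrightarrow> m \<le> h z" using fin by (simp add: m_def)
  have "m \<in> h ` B" using fin \<open>x \<in> B\<close> unfolding m_def by (intro Min_in) auto
  then have ne: "{z\<in>B. h z = m} \<noteq> {}" by auto
  have "m < 0" using min[OF \<open>x \<in> B\<close>] \<open>\<not> 0 \<le> h x\<close> by simp
  define x0 where "x0 = Max {z\<in>B. h z = m}"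
  have "x0 \<in> {z\<in>B. h z = m}" using fin ne unfolding x0_def by (intro Max_in) auto
  then have x0: "x0 \<in> B" "h x0 = m" by auto
  have rightmost: "\<And>z. z \<in> B \<Longrightarrow> h z = m \<Longrightarrow> z \<le> x0" using fin by (simp add: x0_def)
  let ?h0 = "zero_ext B h"
  have ge: "\<And>z. m \<le> ?h0 z" using min \<open>m < 0\<close> by (simp add: zero_ext_def)
  have gt: "m < ?h0 (x0 + 1)"
    using min[of "x0 + 1"] rightmost[of "x0 + 1"] \<open>m < 0\<close> by (force simp: zero_ext_def)
  have at_x0: "?h0 x0 = m" using x0 by (simp add: zero_ext_def)
  have "band_lap W ?h0 x0 < (\<Sum>d=1..W. 0)"
    unfolding band_lap_def
  proof (rule sum_strict_mono_ex1)
    show "\<forall>d\<in>{1..W}. 2 * ?h0 x0 - ?h0 (x0 + d) - ?h0 (x0 - d) \<le> 0"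
    proof
      fix d show "2 * ?h0 x0 - ?h0 (x0 + d) - ?h0 (x0 - d) \<le> 0"
        using ge[of "x0 + d"] ge[of "x0 - d"] at_x0 by linarith
    qed
    show "\<exists>d\<in>{1..W}. 2 * ?h0 x0 - ?h0 (x0 + d) - ?h0 (x0 - d) < 0"
      using W ge[of "x0 - 1"] gt at_x0 by (intro bexI[of _ 1]) auto
  qed simp
  then have "dirichlet_lap B W h x0 < 0"
    using dirichlet_lap_eq_band_lap[OF fin x0(1)] W by simp
  with L[OF x0(1)] show False by simp
qed

lemma dirichlet_lap_comparison:
  assumes "finite B" "1 \<le> W" and "\<And>y. y \<in> B \<Longrightarrow> dirichlet_lap B W g y \<le> dirichlet_lap B W f y"
  shows "x \<in> B \<Longrightarrow> g x \<le> f x"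
  using dirichlet_lap_nonneg_imp_nonneg[OF assms(1,2), of "\<lambda>z. f z - g z"] assms(3)
  by (simp add: dirichlet_lap_diff)

lemma dirichlet_lap_injective:
  assumes "finite B" "1 \<le> W" and "\<And>y. y \<in> B \<Longrightarrow> dirichlet_lap B W h y = 0"
  shows "x \<in> B \<Longrightarrow> h x = 0"
proof -
  have zero: "dirichlet_lap B W (\<lambda>_. 0) y = 0" for y by (simp add: dirichlet_lap_def)
  show "x \<in> B \<Longrightarrow> h x = 0"
    using dirichlet_lap_comparison[OF assms(1,2), of h "\<lambda>_. 0" x]
      dirichlet_lap_comparison[OF assms(1,2), of "\<lambda>_. 0" h x] assms(3) zero
    by fastforce
qed

section \<open>Inverse of a nonsingular matrix indexed by a finite set\<close>

lemma finite_enumeration: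
  assumes "finite B"
  obtains e f where "bij_betw e {0..<card B} B"
    and "\<And>i. i < card B \<Longrightarrow> e i \<in> B \<and> f (e i) = i"
    and "\<And>x. x \<in> B \<Longrightarrow> f x < card B \<and> e (f x) = x"
proof -
  obtain e where e: "bij_betw e {0..<card B} B" using ex_bij_betw_nat_finite[OF assms] by blast
  show ?thesis
  proof (rule that[OF e])
    show "\<And>i. i < card B \<Longrightarrow> e i \<in> B \<and> inv_into {0..<card B} e (e i) = i"
      using e by (auto simp: bij_betw_def)
    show "\<And>x. x \<in> B \<Longrightarrow> inv_into {0..<card B} e x < card B \<and> e (inv_into {0..<card B} e x) = x"
      using e bij_betw_inv_into_right bij_betw_apply[OF bij_betw_inv_into[OF e]] by fastforce
  qed
qed

lemma reindexed_mat_right_invertible: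
  fixes M :: "'a \<Rightarrow> 'a \<Rightarrow> real"
  assumes e: "bij_betw e {0..<n} B"
    and ef: "\<And>x. x \<in> B \<Longrightarrow> f x < n \<and> e (f x) = x" and fe: "\<And>i. i < n \<Longrightarrow> e i \<in> B \<and> f (e i) = i"
    and inj: "\<And>h. \<forall>x\<in>B. (\<Sum>z\<in>B. M x z * h z) = 0 \<Longrightarrow> \<forall>x\<in>B. h x = 0"
  shows "\<exists>A'. A' \<in> carrier_mat n n \<and> mat n n (\<lambda>(i, j). M (e i) (e j)) * A' = 1\<^sub>m n"
proof -
  define A where "A = mat n n (\<lambda>(i, j). M (e i) (e j))"
  have A: "A \<in> carrier_mat n n" by (simp add: A_def)
  have "det A \<noteq> 0"
  proof
    assume "det A = 0"
    then obtain v where v: "v \<in> carrier_vec n" "v \<noteq> 0\<^sub>v n" "A *\<^sub>v v = 0\<^sub>v n"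
      using det_0_iff_vec_prod_zero[OF A] by blast
    have "\<forall>x\<in>B. (\<Sum>z\<in>B. M x z * v $ f z) = 0"
    proof
      fix x assume x: "x \<in> B"
      have "(\<Sum>z\<in>B. M x z * v $ f z) = (\<Sum>i\<in>{0..<n}. M x (e i) * v $ i)"
        using sum.reindex_bij_betw[OF e, of "\<lambda>z. M x z * v $ f z"] fe by simp
      also have "\<dots> = (A *\<^sub>v v) $ f x"
        using ef[OF x] v(1) by (simp add: A_def scalar_prod_def)
      finally show "(\<Sum>z\<in>B. M x z * v $ f z) = 0" using v(3) ef[OF x] by simp
    qed
    then have "\<forall>x\<in>B. v $ f x = 0" by (rule inj)
    then have "v = 0\<^sub>v n" using v(1) fe by (intro eq_vecI) force+
    with v(2) show False ..
  qed
  then have "A \<in> Units (ring_mat TYPE(real) n ())" by (rule det_non_zero_imp_unit[OF A])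
  then show ?thesis by (auto simp: Units_def ring_mat_def A_def)
qed

lemma ex_right_inverse_on:
  fixes M :: "'a \<Rightarrow> 'a \<Rightarrow> real"
  assumes fin: "finite B"
    and inj: "\<And>h. \<forall>x\<in>B. (\<Sum>z\<in>B. M x z * h z) = 0 \<Longrightarrow> \<forall>x\<in>B. h x = 0"
  shows "\<exists>G. (\<forall>x\<in>B. \<forall>y\<in>B. (\<Sum>z\<in>B. M x z * G z y) = (if x = y then 1 else 0))
           \<and> (\<forall>x y. x \<notin> B \<or> y \<notin> B \<longrightarrow> G x y = 0)"
proof -
  obtain e f where e: "bij_betw e {0..<card B} B"
    and fe: "\<And>i. i < card B \<Longrightarrow> e i \<in> B \<and> f (e i) = i"
    and ef: "\<And>x. x \<in> B \<Longrightarrow> f x < card B \<and> e (f x) = x"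
    using finite_enumeration[OF fin] by blast
  obtain A' where A': "A' \<in> carrier_mat (card B) (card B)"
    "mat (card B) (card B) (\<lambda>(i, j). M (e i) (e j)) * A' = 1\<^sub>m (card B)"
    using reindexed_mat_right_invertible[OF e ef fe inj] by blast
  define G where "G x y = (if x \<in> B \<and> y \<in> B then A' $$ (f x, f y) else 0)" for x y
  have "(\<Sum>z\<in>B. M x z * G z y) = (if x = y then 1 else 0)" if x: "x \<in> B" and y: "y \<in> B" for x y
  proof -
    have "(\<Sum>z\<in>B. M x z * G z y) = (\<Sum>i\<in>{0..<card B}. M x (e i) * G (e i) y)"
      by (rule sum.reindex_bij_betw[OF e, symmetric])
    also have "\<dots> = (\<Sum>i\<in>{0..<card B}. M x (e i) * A' $$ (i, f y))"
      using fe y by (intro sum.cong) (auto simp: G_def)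
    also have "\<dots> = (mat (card B) (card B) (\<lambda>(i, j). M (e i) (e j)) * A') $$ (f x, f y)"
      using ef[OF x] ef[OF y] A'(1) by (simp add: scalar_prod_def)
    moreover have "f x = f y \<longleftrightarrow> x = y" using ef x y by metis
    ultimately show ?thesis
      using A'(2) ef[OF x] ef[OF y] by simp
  qed
  then show ?thesis by (intro exI[of _ G]) (auto simp: G_def)
qed

lemma mat_inv_on_right_inverse:
  fixes M :: "int \<Rightarrow> int \<Rightarrow> real"
  assumes fin: "finite B"
    and inj: "\<And>h. \<forall>x\<in>B. (\<Sum>z\<in>B. M x z * h z) = 0 \<Longrightarrow> \<forall>x\<in>B. h x = 0"
  shows "x \<in> B \<Longrightarrow> y \<in> B \<Longrightarrow> (\<Sum>z\<in>B. M x z * mat_inv_on B M z y) = (if x = y then 1 else 0)"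
proof -
  let ?P = "\<lambda>G. (\<forall>x\<in>B. \<forall>y\<in>B. (\<Sum>z\<in>B. M x z * G z y) = (if x = y then 1 else 0))
                 \<and> (\<forall>x y. x \<notin> B \<or> y \<notin> B \<longrightarrow> G x y = 0)"
  obtain G where G: "?P G" using ex_right_inverse_on[OF fin inj] by blast
  have "G' = G" if G': "?P G'" for G'
  proof (intro ext)
    fix x y
    have "\<forall>w\<in>B. (\<Sum>z\<in>B. M w z * (G' z y - G z y)) = 0" if "y \<in> B"
      using G G' that by (simp add: right_diff_distrib sum_subtractf)
    then have "x \<in> B \<Longrightarrow> y \<in> B \<Longrightarrow> G' x y - G x y = 0"
      using inj[of "\<lambda>z. G' z y - G z y"] by blast
    then show "G' x y = G x y" using G G' by fastforce
  qed
  then have "?P (mat_inv_on B M)"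
    unfolding mat_inv_on_def using G by (intro theI[of ?P G]) blast+
  then show "x \<in> B \<Longrightarrow> y \<in> B \<Longrightarrow> (\<Sum>z\<in>B. M x z * mat_inv_on B M z y) = (if x = y then 1 else 0)"
    by blast
qed

lemma right_inverse_on_symmetric:
  fixes M G :: "'a \<Rightarrow> 'a \<Rightarrow> real"
  assumes fin: "finite B" and sym: "\<And>y z. M y z = M z y"
    and inv: "\<And>x y. x \<in> B \<Longrightarrow> y \<in> B \<Longrightarrow> (\<Sum>z\<in>B. M x z * G z y) = (if x = y then 1 else 0)"
    and "a \<in> B" "b \<in> B"
  shows "G a b = G b a"
proof -
  have "G a b = (\<Sum>y\<in>B. if y = a then G y b else 0)"
    using fin \<open>a \<in> B\<close> by simp
  also have "\<dots> = (\<Sum>y\<in>B. (\<Sum>z\<in>B. M y z * G z a) * G y b)"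
    using inv \<open>a \<in> B\<close> by (intro sum.cong) auto
  also have "\<dots> = (\<Sum>y\<in>B. \<Sum>z\<in>B. G z a * (M z y * G y b))"
    unfolding sum_distrib_right by (intro sum.cong refl) (simp add: sym mult_ac)
  also have "\<dots> = (\<Sum>z\<in>B. G z a * (\<Sum>y\<in>B. M z y * G y b))"
    by (subst sum.swap) (simp add: sum_distrib_left)
  also have "\<dots> = (\<Sum>z\<in>B. if z = b then G z a else 0)"
    using inv \<open>b \<in> B\<close> by (intro sum.cong) auto
  also have "\<dots> = G b a"
    using fin \<open>b \<in> B\<close> by simp
  finally show ?thesis .
qed

section \<open>Green's function of a finite set\<close>

lemma dir_lap_symmetric: "dir_lap W y z = dir_lap W z y"
  by (auto simp: dir_lap_def abs_minus_commute)

locale band_domain =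
  fixes B :: "int set" and W :: int
  assumes finite_domain: "finite B" and band_width: "1 \<le> W"
begin

abbreviation G :: "int \<Rightarrow> int \<Rightarrow> real" where
  "G \<equiv> mat_inv_on B (dir_lap W)"

lemma dirichlet_lap_green:
  assumes "y \<in> B" "\<eta> \<in> B"
  shows "dirichlet_lap B W (\<lambda>z. G z \<eta>) y = (if y = \<eta> then 1 else 0)"
  unfolding dirichlet_lap_def
  using assms dirichlet_lap_injective[OF finite_domain band_width]
  by (intro mat_inv_on_right_inverse[OF finite_domain]) (auto simp: dirichlet_lap_def)

lemma green_symmetric:
  assumes "a \<in> B" "b \<in> B"
  shows "G a b = G b a"
proof (rule right_inverse_on_symmetric[OF finite_domain])
  show "\<And>y z. dir_lap W y z = dir_lap W z y" by (rule dir_lap_symmetric)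
  show "\<And>x y. x \<in> B \<Longrightarrow> y \<in> B \<Longrightarrow> (\<Sum>z\<in>B. dir_lap W x z * G z y) = (if x = y then 1 else 0)"
    using dirichlet_lap_green by (simp add: dirichlet_lap_def)
qed (use assms in auto)

lemma dirichlet_lap_one_eq:
  "y \<in> B \<Longrightarrow> dirichlet_lap B W (\<lambda>_. 1) y
     = (\<Sum>d=1..W. (if y + d \<in> B then 0 else 1) + (if y - d \<in> B then 0 else 1))"
  using dirichlet_lap_eq_band_lap[OF finite_domain] band_width
  by (simp add: band_lap_def zero_ext_def) (intro sum.cong refl; simp)

lemma dirichlet_lap_one_nonneg: "y \<in> B \<Longrightarrow> 0 \<le> dirichlet_lap B W (\<lambda>_. 1) y"
  by (simp add: dirichlet_lap_one_eq sum_nonneg)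

lemma dirichlet_lap_one_ge_1:
  assumes "y \<in> B" "x \<notin> B" "0 < \<bar>x - y\<bar>" "\<bar>x - y\<bar> \<le> W"
  shows "1 \<le> dirichlet_lap B W (\<lambda>_. 1) y"
proof -
  let ?t = "\<lambda>d. (if y + d \<in> B then 0 else 1) + (if y - d \<in> B then 0 else 1) :: real"
  have "x = y + \<bar>x - y\<bar> \<or> x = y - \<bar>x - y\<bar>" by (auto simp: abs_if)
  then have "1 \<le> ?t \<bar>x - y\<bar>" using assms(2) by auto
  also have "\<dots> \<le> (\<Sum>d=1..W. ?t d)"
    using assms(3,4) by (intro member_le_sum) auto
  finally show ?thesis using dirichlet_lap_one_eq[OF assms(1)] by simp
qed

lemma green_neighbour_sum_le_one:
  assumes "x \<notin> B" "\<eta> \<in> B"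
  shows "(\<Sum>y\<in>{y\<in>B. 0 < \<bar>x - y\<bar> \<and> \<bar>x - y\<bar> \<le> W}. G \<eta> y) \<le> 1"
proof -
  let ?N = "{y\<in>B. 0 < \<bar>x - y\<bar> \<and> \<bar>x - y\<bar> \<le> W}"
  have fin_N: "finite ?N" using finite_domain by simp
  have "dirichlet_lap B W (\<lambda>w. \<Sum>y\<in>?N. G w y) z \<le> dirichlet_lap B W (\<lambda>_. 1) z"
    if z: "z \<in> B" for z
  proof -
    have "dirichlet_lap B W (\<lambda>w. \<Sum>y\<in>?N. G w y) z = (\<Sum>y\<in>?N. dirichlet_lap B W (\<lambda>w. G w y) z)"
      unfolding dirichlet_lap_def by (simp add: sum_distrib_left sum.swap[of _ B])
    also have "\<dots> = (\<Sum>y\<in>?N. if z = y then 1 else 0)"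
      using z by (intro sum.cong refl) (simp add: dirichlet_lap_green)
    also have "\<dots> = (if z \<in> ?N then 1 else 0)"
      using fin_N by simp
    also have "\<dots> \<le> dirichlet_lap B W (\<lambda>_. 1) z"
      using dirichlet_lap_one_ge_1[OF z assms(1)] dirichlet_lap_one_nonneg[OF z] by auto
    finally show ?thesis .
  qed
  from dirichlet_lap_comparison[OF finite_domain band_width this assms(2)] show ?thesis
    by simp
qed

end

section \<open>Barriers on an interval\<close>

locale band_interval =
  fixes W n \<xi> :: int
  assumes W_ge_1: "1 \<le> W" and n_nonneg: "0 \<le> n"
begin

sublocale band_domain "{\<xi>-n..\<xi>+n}" W
  using W_ge_1 by unfold_locales simp_all

lemma green_upper:
  assumes "y \<in> {\<xi>-n..\<xi>+n}"
  shows "G \<xi> y \<le> 1 / real_of_int W ^ 2 * real_of_int (W + n - \<bar>y - \<xi>\<bar>)"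
proof -
  let ?f = "\<lambda>z. 1 / real_of_int W ^ 2 * real_of_int (W + n - \<bar>z - \<xi>\<bar>)"
  have "G z \<xi> \<le> ?f z" if "z \<in> {\<xi>-n..\<xi>+n}" for z
  proof (rule dirichlet_lap_comparison[OF finite_domain band_width _ that])
    fix y assume y: "y \<in> {\<xi>-n..\<xi>+n}"
    have "(if y = \<xi> then 1 else 0) \<le> 1 / real_of_int W ^ 2 * (2 * real_of_int (tent_curvature W (y - \<xi>)))"
    proof (cases "y = \<xi>")
      case True
      then have "real_of_int (2 * tent_curvature W (y - \<xi>)) = real_of_int W * (real_of_int W + 1)"
        using tent_curvature_0 W_ge_1 by simp
      with True W_ge_1 show ?thesis by (simp add: field_simps power2_eq_square)
    qed (simp add: tent_curvature_nonneg)
    also have "\<dots> = band_lap W ?f y" by (simp only: band_lap_scale band_lap_tent)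
    also have "\<dots> \<le> dirichlet_lap {\<xi>-n..\<xi>+n} W ?f y"
      using y W_ge_1 by (intro band_lap_le_dirichlet_lap) auto
    finally show "dirichlet_lap {\<xi>-n..\<xi>+n} W (\<lambda>z. G z \<xi>) y \<le> dirichlet_lap {\<xi>-n..\<xi>+n} W ?f y"
      using dirichlet_lap_green[OF y] n_nonneg by simp
  qed
  then show ?thesis using assms green_symmetric[of \<xi> y] n_nonneg by simp
qed

lemma green_lower:
  assumes "y \<in> {\<xi>-n..\<xi>+n}"
  shows "1 / (2 * real_of_int W ^ 3) * real_of_int (n + 1 - \<bar>y - \<xi>\<bar>) \<le> G \<xi> y"
proof -
  define s where "s = (real_of_int W - 1) / (2 * real_of_int W ^ 2)"
  let ?f = "\<lambda>z. 1 / (2 * real_of_int W ^ 3) * real_of_int (n + 1 - \<bar>z - \<xi>\<bar>)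
              + s * (if z = \<xi> then 1 else 0)"
  have outside: "?f z \<le> 0" if "z \<notin> {\<xi>-n..\<xi>+n}" for z
  proof -
    have "real_of_int (n + 1 - \<bar>z - \<xi>\<bar>) \<le> 0"
      using that n_nonneg by (simp only: of_int_le_0_iff) auto
    then have "1 / (2 * real_of_int W ^ 3) * real_of_int (n + 1 - \<bar>z - \<xi>\<bar>) \<le> 0"
      using W_ge_1 by (intro mult_nonneg_nonpos) auto
    moreover have "z \<noteq> \<xi>" using that n_nonneg by auto
    ultimately show ?thesis by simp
  qed
  have "?f z \<le> G z \<xi>" if "z \<in> {\<xi>-n..\<xi>+n}" for z
  proof (rule dirichlet_lap_comparison[OF finite_domain band_width _ that])
    fix y assume y: "y \<in> {\<xi>-n..\<xi>+n}"
    have "dirichlet_lap {\<xi>-n..\<xi>+n} W ?f y \<le> band_lap W ?f y"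
      using y W_ge_1 outside by (intro dirichlet_lap_le_band_lap) auto
    also have "\<dots> = 1 / (2 * real_of_int W ^ 3) * (2 * real_of_int (tent_curvature W (y - \<xi>)))
                   + s * band_lap W (\<lambda>z. if z = \<xi> then 1 else 0) y"
      by (simp only: band_lap_add band_lap_scale band_lap_tent)
    also have "\<dots> \<le> (if y = \<xi> then 1 else 0)"
      using spiked_tent_curvature_le[OF W_ge_1, of "y - \<xi>"] W_ge_1
      by (simp add: band_lap_spike s_def)
    finally show "dirichlet_lap {\<xi>-n..\<xi>+n} W ?f y \<le> dirichlet_lap {\<xi>-n..\<xi>+n} W (\<lambda>z. G z \<xi>) y"
      using dirichlet_lap_green[OF y] n_nonneg by simp
  qed
  then have "?f y \<le> G y \<xi>" using assms .
  moreover have "0 \<le> s" using W_ge_1 by (simp add: s_def)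
  moreover have "G \<xi> y = G y \<xi>" using assms n_nonneg by (intro green_symmetric) auto
  ultimately show ?thesis by (cases "y = \<xi>") auto
qed

lemma poisson_lower:
  assumes "n < \<bar>x - \<xi>\<bar>" "\<bar>x - \<xi>\<bar> \<le> n + W"
  shows "1 / (2 * real_of_int W ^ 3) \<le> (\<Sum>y\<in>{y\<in>{\<xi>-n..\<xi>+n}. 0 < \<bar>x - y\<bar> \<and> \<bar>x - y\<bar> \<le> W}. G \<xi> y)"
proof -
  define y0 where "y0 = (if \<xi> < x then \<xi> + n else \<xi> - n)"
  have y0: "y0 \<in> {y\<in>{\<xi>-n..\<xi>+n}. 0 < \<bar>x - y\<bar> \<and> \<bar>x - y\<bar> \<le> W}"
    using assms n_nonneg by (auto simp: y0_def)
  have "\<bar>y0 - \<xi>\<bar> = n" using n_nonneg by (simp add: y0_def)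
  then have "1 / (2 * real_of_int W ^ 3) \<le> G \<xi> y0"
    using green_lower[of y0] y0 by simp
  also have "\<dots> \<le> (\<Sum>y\<in>{y\<in>{\<xi>-n..\<xi>+n}. 0 < \<bar>x - y\<bar> \<and> \<bar>x - y\<bar> \<le> W}. G \<xi> y)"
  proof (rule member_le_sum[OF y0])
    fix y assume "y \<in> {y\<in>{\<xi>-n..\<xi>+n}. 0 < \<bar>x - y\<bar> \<and> \<bar>x - y\<bar> \<le> W} - {y0}"
    then have "y \<in> {\<xi>-n..\<xi>+n}" by simp
    moreover from this have "0 \<le> 1 / (2 * real_of_int W ^ 3) * real_of_int (n + 1 - \<bar>y - \<xi>\<bar>)"
      using W_ge_1 by (intro mult_nonneg_nonneg) auto
    ultimately show "0 \<le> G \<xi> y"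
      using green_lower[of y] by linarith
  qed (rule finite_subset[of _ "{\<xi>-n..\<xi>+n}"]; auto)
  finally show ?thesis .
qed

end

theorem lemmaB1:
  fixes W r \<xi> :: int
  assumes "W \<ge> 1" and "r \<ge> 1"
  shows "(\<forall>x\<in>band_ball W r \<xi>.
            1 / (2 * real_of_int W ^ 3) * real_of_int (r * W + 1 - \<bar>x - \<xi>\<bar>) \<le> green W r \<xi> \<xi> x
          \<and> green W r \<xi> \<xi> x \<le> 1 / real_of_int W ^ 2 * real_of_int (W + r * W - \<bar>x - \<xi>\<bar>))
       \<and> (\<forall>x\<in>band_boundary W r \<xi>.
            1 / (2 * real_of_int W ^ 3) \<le> poisson W r \<xi> x \<and> poisson W r \<xi> x \<le> 1)"
proof -
  define n where "n = r * W"
  interpret band_interval W n \<xi>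
    using assms by unfold_locales (simp_all add: n_def)
  have ball: "band_ball W r \<xi> = {\<xi>-n..\<xi>+n}"
    by (auto simp: band_ball_def n_def abs_le_iff)
  have boundary: "band_boundary W r \<xi> = {x. n < \<bar>x - \<xi>\<bar> \<and> \<bar>x - \<xi>\<bar> \<le> n + W}"
    by (simp add: band_boundary_def n_def algebra_simps)
  have "\<xi> \<in> {\<xi>-n..\<xi>+n}" using n_nonneg by simp
  moreover have "x \<notin> {\<xi>-n..\<xi>+n}" if "n < \<bar>x - \<xi>\<bar>" for x using that by auto
  ultimately show ?thesis
    unfolding poisson_def green_def ball boundary n_def[symmetric]
    using green_lower green_upper poisson_lower green_neighbour_sum_le_one
    by (auto simp: add.commute)
qed

end
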